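(* Let $T$ be a tree, $(X_\gamma)_{\gamma\in\Gamma_T}$ a $\mathbf{P}_t$-chain on $T$, $s>0$, and let $x_1,\dots,x_m$ be distinct points of $\Gamma_T$ each at distance exactly $s$ from the root. For $i\in\mathcal{S}$ let $S_i=|\{r:X_{x_r}=i\}|$. Then $\mathbb{E}^i[S_i]=p_{ii}(s)m$ and for every $\delta>0$, $$\mathbb{P}^i\big[|S_i-\mathbb{E}^i[S_i]|>\delta m\big]\le\frac{1-e^{-q_is}}{\delta^2}.$$
   Context: A tree $T=(V,E,\rho,\ell)$ is a finite rooted tree with positive edge lengths, viewed as a metric object with point set $\Gamma_T$; distance from the root to a point is the length of the path from $\rho$. Markov process on countable $\mathcal{S}$ with transition matrices $\mathbf{P}_t=(p_{ij}(t))$ and stable conservative $Q$-matrix, $q_i=-q_{ii}=\sum_{j\ne i}q_{ij}<\infty$. A $\mathbf{P}_t$-chain on $T$: root state $X_\rho$, then along each edge $(u,v)$ run the chain from $X_u$ for time $\ell_{(u,v)}$, independently on outgoing edges given the branching state, $X_\gamma$ being the state at point $\gamma$; $\mathbb{P}^i,\mathbb{E}^i$ refer to root state $i$. *)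

theory Defs
  imports "HOL-Probability.Probability"
begin

text \<open>P t i j = p_ij(t) for t >= 0 (values at t < 0 are irrelevant);
  Q i j = q_ij = right derivative of p_ij at 0 (finite, i.e. stable);
  conservative: sum over j ~= i of q_ij equals q_i = - q_ii.\<close>

definition markov_transition :: "(real \<Rightarrow> 'a::countable \<Rightarrow> 'a \<Rightarrow> real) \<Rightarrow> ('a \<Rightarrow> 'a \<Rightarrow> real) \<Rightarrow> bool" where
  "markov_transition P Q \<longleftrightarrow>
     (\<forall>t\<ge>0. \<forall>i j. P t i j \<ge> 0) \<and>
     (\<forall>t\<ge>0. \<forall>i. ((\<lambda>j. P t i j) has_sum 1) UNIV) \<and>
     (\<forall>i j. P 0 i j = (if i = j then 1 else 0)) \<and>
     (\<forall>s\<ge>0. \<forall>t\<ge>0. \<forall>i k. ((\<lambda>j. P s i j * P t j k) has_sum P (s + t) i k) UNIV) \<and>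
     (\<forall>i j. ((\<lambda>t. P t i j) has_real_derivative Q i j) (at_right 0)) \<and>
     (\<forall>i. ((\<lambda>j. Q i j) has_sum (- Q i i)) (UNIV - {i}))"

definition qrate :: "('a \<Rightarrow> 'a \<Rightarrow> real) \<Rightarrow> 'a \<Rightarrow> real" where
  "qrate Q i = - Q i i"

text \<open>A finite rooted tree given by a parent map: every non-root vertex v has parent
  par v, the edge (par v, v) has length l v > 0, and iterating par reaches the root.\<close>

definition rooted_tree :: "'v set \<Rightarrow> 'v \<Rightarrow> ('v \<Rightarrow> 'v) \<Rightarrow> ('v \<Rightarrow> real) \<Rightarrow> bool" where
  "rooted_tree V \<rho> par l \<longleftrightarrow> finite V \<and> \<rho> \<in> V \<and> par \<rho> = \<rho> \<and>
     (\<forall>v\<in>V - {\<rho>}. par v \<in> V \<and> l v > 0 \<and> (\<exists>n. (par ^^ n) v = \<rho>))"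

text \<open>Points of Gamma_T: the root (rho, 0), and (v, t) with 0 < t <= l v, the point on
  the edge (par v, v) at distance t from par v (so (v, l v) is the vertex v).\<close>

definition tree_points :: "'v set \<Rightarrow> 'v \<Rightarrow> ('v \<Rightarrow> real) \<Rightarrow> ('v \<times> real) set" where
  "tree_points V \<rho> l = insert (\<rho>, 0) {(v, t). v \<in> V - {\<rho>} \<and> 0 < t \<and> t \<le> l v}"

definition vdepth :: "'v \<Rightarrow> ('v \<Rightarrow> 'v) \<Rightarrow> ('v \<Rightarrow> real) \<Rightarrow> 'v \<Rightarrow> real" where
  "vdepth \<rho> par l v = (\<Sum>k<(LEAST n. (par ^^ n) v = \<rho>). l ((par ^^ k) v))"

definition pdist :: "'v \<Rightarrow> ('v \<Rightarrow> 'v) \<Rightarrow> ('v \<Rightarrow> real) \<Rightarrow> 'v \<times> real \<Rightarrow> real" where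
  "pdist \<rho> par l \<gamma> = (if fst \<gamma> = \<rho> then 0 else vdepth \<rho> par l (par (fst \<gamma>)) + snd \<gamma>)"

text \<open>Genealogical order: g is on the path from the root to g'.\<close>
definition pt_le :: "('v \<Rightarrow> 'v) \<Rightarrow> 'v \<times> real \<Rightarrow> 'v \<times> real \<Rightarrow> bool" where
  "pt_le par g g' \<longleftrightarrow> (fst g = fst g' \<and> snd g \<le> snd g') \<or> (\<exists>n\<ge>1. (par ^^ n) (fst g') = fst g)"

definition meet_closed :: "'v set \<Rightarrow> 'v \<Rightarrow> ('v \<Rightarrow> 'v) \<Rightarrow> ('v \<Rightarrow> real) \<Rightarrow> ('v \<times> real) set \<Rightarrow> bool" where
  "meet_closed V \<rho> par l W \<longleftrightarrow>
     (\<forall>a\<in>W. \<forall>b\<in>W. \<exists>c\<in>W. pt_le par c a \<and> pt_le par c b \<and>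
        (\<forall>d\<in>tree_points V \<rho> l. pt_le par d a \<and> pt_le par d b \<longrightarrow> pt_le par d c))"

definition parent_in :: "('v \<Rightarrow> 'v) \<Rightarrow> ('v \<times> real) set \<Rightarrow> 'v \<times> real \<Rightarrow> 'v \<times> real" where
  "parent_in par W w = (THE u. u \<in> W \<and> pt_le par u w \<and> u \<noteq> w \<and>
       (\<forall>u'\<in>W. pt_le par u' w \<and> u' \<noteq> w \<longrightarrow> pt_le par u' u))"

text \<open>X is a P_t-chain on the tree under P^i (root state i): for every finite set W of
  points containing the root and closed under meets, the joint law of (X_w)_{w in W} is
  the root point mass at i times the product of transition probabilities along the
  edges of the subtree spanned by W.  This determines all finite-dimensional
  distributions, which is what the construction in the paper yields.\<close>

definition tree_chain :: "'v set \<Rightarrow> 'v \<Rightarrow> ('v \<Rightarrow> 'v) \<Rightarrow> ('v \<Rightarrow> real) \<Rightarrow>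
    (real \<Rightarrow> 'a \<Rightarrow> 'a \<Rightarrow> real) \<Rightarrow> 'a \<Rightarrow> 'w measure \<Rightarrow> ('v \<times> real \<Rightarrow> 'w \<Rightarrow> 'a) \<Rightarrow> bool" where
  "tree_chain V \<rho> par l P i M X \<longleftrightarrow>
     prob_space M \<and>
     (\<forall>\<gamma>\<in>tree_points V \<rho> l. X \<gamma> \<in> measurable M (count_space UNIV)) \<and>
     (\<forall>W. finite W \<and> W \<subseteq> tree_points V \<rho> l \<and> (\<rho>, 0) \<in> W \<and> meet_closed V \<rho> par l W \<longrightarrow>
        (\<forall>a. measure M {\<omega> \<in> space M. \<forall>w\<in>W. X w \<omega> = a w} =
             (if a (\<rho>, 0) = i then 1 else 0) *
             (\<Prod>w\<in>W - {(\<rho>, 0)}.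
                P (pdist \<rho> par l w - pdist \<rho> par l (parent_in par W w))
                  (a (parent_in par W w)) (a w))))"

definition occ :: "('p \<Rightarrow> 'w \<Rightarrow> 'a) \<Rightarrow> (nat \<Rightarrow> 'p) \<Rightarrow> nat \<Rightarrow> 'a \<Rightarrow> 'w \<Rightarrow> real" where
  "occ X x m i \<omega> = real (card {r \<in> {1..m}. X (x r) \<omega> = i})"

end

theory Submission imports Defs begin

text \<open>The pair (X_\<rho>, X_x_r) has the law of the
  chain run for time s, so each x_r is in state i with probability p = p_ii(s), and E S_i = p m.
  Whatever the correlations between the points, Cauchy--Schwarz gives
  (S_i - p m)^2 \<le> m \<Sum>_r (1{X_x_r = i} - p)^2, hence Var S_i \<le> m^2 p (1 - p) \<le> m^2 (1 - p), and
  Chebyshev's inequality reduces the claim to p_ii(s) \<ge> exp (- q_i s). That bound follows from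
  supermultiplicativity p_ii(a) p_ii(b) \<le> p_ii(a + b) (Chapman--Kolmogorov with nonnegative terms)
  and p_ii(h) = 1 - q_i h + o(h): p_ii(s) \<ge> p_ii(s/n)^n \<longrightarrow> exp (- q_i s).\<close>

locale supermultiplicative_fun =
  fixes f :: "real \<Rightarrow> real"
  assumes at_zero: "f 0 = 1"
    and nonneg: "t \<ge> 0 \<Longrightarrow> f t \<ge> 0"
    and supermult: "a \<ge> 0 \<Longrightarrow> b \<ge> 0 \<Longrightarrow> f a * f b \<le> f (a + b)"
begin

lemma power_le: "h \<ge> 0 \<Longrightarrow> f h ^ n \<le> f (real n * h)"
proof (induction n)
  case 0
  then show ?case by (simp add: at_zero)
next
  case (Suc n)
  have "f h ^ Suc n = f h ^ n * f h" by simp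
  also have "\<dots> \<le> f (real n * h) * f h"
    using Suc by (intro mult_right_mono nonneg) simp_all
  also have "\<dots> \<le> f (real n * h + h)"
    using Suc.prems by (simp add: supermult)
  finally show ?case by (simp add: algebra_simps)
qed

lemma exp_diff_le_of_right_deriv:
  assumes deriv: "(f has_real_derivative q) (at_right 0)" and "t > 0" "e > 0"
  shows "exp ((q - e) * t) \<le> f t"
proof -
  define c where "c = (q - e) * t"
  have "((\<lambda>h. (f h - 1) / h) \<longlongrightarrow> q) (at_right 0)"
    using deriv by (simp add: has_field_derivative_iff at_zero)
  then have "\<forall>\<^sub>F h in at_right 0. q - e < (f h - 1) / h"
    using \<open>e > 0\<close> by (auto simp: tendsto_iff dist_real_def elim!: eventually_mono)
  moreover have "\<forall>\<^sub>F n in sequentially. 0 < t / real n"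
    using \<open>t > 0\<close> by (auto simp: eventually_sequentially intro!: exI[of _ 1])
  then have "filterlim (\<lambda>n. t / real n) (at_right 0) sequentially"
    by (intro tendsto_imp_filterlim_at_right tendsto_divide_0[OF tendsto_const]
        filterlim_at_top_imp_at_infinity filterlim_real_sequentially)
  ultimately have "\<forall>\<^sub>F n in sequentially. q - e < (f (t / real n) - 1) / (t / real n)"
    by (rule eventually_compose_filterlim)
  moreover have "\<forall>\<^sub>F n in sequentially. \<bar>c\<bar> < real n"
    by (simp add: eventually_sequentially) (meson reals_Archimedean2 less_le_trans of_nat_le_iff)
  ultimately have "\<forall>\<^sub>F n in sequentially. (1 + c / real n) ^ n \<le> f t"
  proof eventually_elim
    case (elim n)
    then have n: "real n > 0" by linarith
    have "1 + c / real n \<le> f (t / real n)"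
      using elim(1) \<open>t > 0\<close> n by (simp add: c_def pos_less_divide_eq field_simps)
    moreover have "0 \<le> 1 + c / real n"
      using elim(2) n by (simp add: field_simps abs_less_iff)
    ultimately have "(1 + c / real n) ^ n \<le> f (t / real n) ^ n"
      by (simp add: power_mono)
    also have "\<dots> \<le> f t"
      using power_le[of "t / real n" n] \<open>t > 0\<close> n by simp
    finally show ?case .
  qed
  then show ?thesis
    unfolding c_def[symmetric]
    by (rule tendsto_le[OF trivial_limit_sequentially tendsto_const tendsto_exp_limit_sequentially])
qed

lemma exp_le_of_right_deriv:
  assumes "(f has_real_derivative q) (at_right 0)" and "t \<ge> 0"
  shows "exp (q * t) \<le> f t"
proof (cases "t = 0")
  case True
  then show ?thesis by (simp add: at_zero)
next
  case False
  have "(\<lambda>n. exp ((q - inverse (real (Suc n))) * t)) \<longlonglongrightarrow> exp ((q - 0) * t)"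
    by (intro tendsto_intros LIMSEQ_inverse_real_of_nat)
  then show ?thesis
    using exp_diff_le_of_right_deriv[OF assms(1)] False \<open>t \<ge> 0\<close>
    by (intro LIMSEQ_le_const2) auto
qed

end

lemma has_sum_nonneg_term_le:
  fixes f :: "'a \<Rightarrow> real"
  assumes "(f has_sum S) A" "\<And>j. j \<in> A \<Longrightarrow> f j \<ge> 0" "k \<in> A"
  shows "f k \<le> S"
  using has_sum_mono2[OF has_sum_finite[of "{k}" f] assms(1)] assms(2,3) by simp

lemma markov_transition_nonneg:
  "markov_transition P Q \<Longrightarrow> t \<ge> 0 \<Longrightarrow> P t i j \<ge> 0"
  unfolding markov_transition_def by blast

lemma markov_transition_le_one:
  assumes "markov_transition P Q" "t \<ge> 0"
  shows "P t i j \<le> 1"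
proof -
  have "(P t i has_sum 1) UNIV"
    using assms unfolding markov_transition_def by blast
  then show ?thesis
    using markov_transition_nonneg[OF assms] by (rule has_sum_nonneg_term_le) simp_all
qed

lemma markov_transition_diag_supermult:
  assumes "markov_transition P Q" "a \<ge> 0" "b \<ge> 0"
  shows "P a i i * P b i i \<le> P (a + b) i i"
proof -
  have "((\<lambda>j. P a i j * P b j i) has_sum P (a + b) i i) UNIV"
    using assms unfolding markov_transition_def by blast
  from has_sum_nonneg_term_le[OF this] show ?thesis
    using markov_transition_nonneg[OF assms(1)] assms(2,3) by (simp add: mult_nonneg_nonneg)
qed

lemma markov_transition_diag_exp_le:
  assumes "markov_transition P Q" "t \<ge> 0"
  shows "exp (- qrate Q i * t) \<le> P t i i"
proof -
  interpret supermultiplicative_fun "\<lambda>t. P t i i"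
  proof
    show "P 0 i i = 1"
      using assms(1) by (simp add: markov_transition_def)
  qed (simp_all add: markov_transition_nonneg[OF assms(1)] markov_transition_diag_supermult[OF assms(1)])
  have "((\<lambda>t. P t i i) has_real_derivative Q i i) (at_right 0)"
    using assms(1) unfolding markov_transition_def by blast
  then show ?thesis
    using exp_le_of_right_deriv assms(2) by (simp add: qrate_def)
qed

lemma pt_le_refl: "pt_le par g g"
  by (simp add: pt_le_def)

lemma pt_le_root:
  assumes "rooted_tree V \<rho> par l" "y \<in> tree_points V \<rho> l"
  shows "pt_le par (\<rho>, 0) y"
proof (cases "y = (\<rho>, 0)")
  case False
  then obtain v t where y: "y = (v, t)" "v \<in> V" "v \<noteq> \<rho>"
    using assms(2) by (auto simp: tree_points_def)
  then obtain n where n: "(par ^^ n) v = \<rho>"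
    using assms(1) unfolding rooted_tree_def by blast
  with y have "n \<ge> 1"
    by (metis funpow_0 less_one not_le)
  with n y show ?thesis
    unfolding pt_le_def by auto
qed (simp add: pt_le_refl)

lemma meet_closed_root_pair:
  assumes "pt_le par (\<rho>, 0) y"
  shows "meet_closed V \<rho> par l {(\<rho>, 0), y}"
  unfolding meet_closed_def
proof (intro ballI)
  fix a b assume ab: "a \<in> {(\<rho>, 0), y}" "b \<in> {(\<rho>, 0), y}"
  show "\<exists>c\<in>{(\<rho>, 0), y}. pt_le par c a \<and> pt_le par c b \<and>
      (\<forall>d\<in>tree_points V \<rho> l. pt_le par d a \<and> pt_le par d b \<longrightarrow> pt_le par d c)"
  proof (cases "a = y \<and> b = y")
    case True
    then show ?thesis using pt_le_refl[of par y] by (intro bexI[of _ y]) auto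
  next
    case False
    then have "a = (\<rho>, 0) \<or> b = (\<rho>, 0)" using ab by auto
    then show ?thesis
      using ab assms pt_le_refl[of par] by (intro bexI[of _ "(\<rho>, 0)"]) auto
  qed
qed

lemma parent_in_root_pair:
  assumes "pt_le par (\<rho>, 0) y" "y \<noteq> (\<rho>, 0)"
  shows "parent_in par {(\<rho>, 0), y} y = (\<rho>, 0)"
  unfolding parent_in_def
proof (rule the_equality)
  show "(\<rho>, 0) \<in> {(\<rho>, 0), y} \<and> pt_le par (\<rho>, 0) y \<and> (\<rho>, 0) \<noteq> y \<and>
      (\<forall>u\<in>{(\<rho>, 0), y}. pt_le par u y \<and> u \<noteq> y \<longrightarrow> pt_le par u (\<rho>, 0))"
    using assms pt_le_refl[of par "(\<rho>, 0)"] by auto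
qed auto

lemma tree_chain_prob_space: "tree_chain V \<rho> par l P i M X \<Longrightarrow> prob_space M"
  by (simp add: tree_chain_def)

lemma tree_chain_measurable:
  "tree_chain V \<rho> par l P i M X \<Longrightarrow> \<gamma> \<in> tree_points V \<rho> l \<Longrightarrow>
    X \<gamma> \<in> measurable M (count_space UNIV)"
  by (simp add: tree_chain_def)

lemma tree_chain_law:
  "tree_chain V \<rho> par l P i M X \<Longrightarrow> finite W \<Longrightarrow> W \<subseteq> tree_points V \<rho> l \<Longrightarrow> (\<rho>, 0) \<in> W \<Longrightarrow>
    meet_closed V \<rho> par l W \<Longrightarrow>
    measure M {\<omega> \<in> space M. \<forall>w\<in>W. X w \<omega> = a w} =
      (if a (\<rho>, 0) = i then 1 else 0) *
      (\<Prod>w\<in>W - {(\<rho>, 0)}. P (pdist \<rho> par l w - pdist \<rho> par l (parent_in par W w))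
                              (a (parent_in par W w)) (a w))"
  unfolding tree_chain_def by blast

lemma root_in_tree_points: "(\<rho>, 0) \<in> tree_points V \<rho> l"
  by (simp add: tree_points_def)

lemma tree_chain_root_state:
  assumes "tree_chain V \<rho> par l P i M X"
  shows "AE \<omega> in M. X (\<rho>, 0) \<omega> = i"
proof -
  interpret prob_space M using tree_chain_prob_space[OF assms] .
  have "prob {\<omega> \<in> space M. \<forall>w\<in>{(\<rho>, 0)}. X w \<omega> = i} = 1"
    using tree_chain_law[OF assms, of "{(\<rho>, 0)}" "\<lambda>_. i"] root_in_tree_points[where V=V and l=l]
      meet_closed_root_pair[OF pt_le_refl, where V=V and l=l] by simp
  then have "AE \<omega> in M. \<omega> \<in> {\<omega> \<in> space M. X (\<rho>, 0) \<omega> = i}"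
    by (intro AE_prob_1) simp
  then show ?thesis
    by (rule AE_mp) simp
qed

lemma tree_chain_point_prob:
  assumes rt: "rooted_tree V \<rho> par l" and tc: "tree_chain V \<rho> par l P i M X"
    and y: "y \<in> tree_points V \<rho> l" "pdist \<rho> par l y > 0"
  shows "measure M {\<omega> \<in> space M. X y \<omega> = j} = P (pdist \<rho> par l y) i j"
proof -
  interpret prob_space M using tree_chain_prob_space[OF tc] .
  have y_ne_root: "y \<noteq> (\<rho>, 0)"
    using y(2) by (auto simp: pdist_def)
  let ?W = "{(\<rho>, 0), y}" and ?a = "\<lambda>w. if w = y then j else i"
  have le: "pt_le par (\<rho>, 0) y" using pt_le_root[OF rt y(1)] .
  have [measurable]: "X y \<in> measurable M (count_space UNIV)"
    "X (\<rho>, 0) \<in> measurable M (count_space UNIV)"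
    using tree_chain_measurable[OF tc] y(1) root_in_tree_points[where V=V and l=l] by auto
  have "measure M {\<omega> \<in> space M. X y \<omega> = j} = measure M {\<omega> \<in> space M. \<forall>w\<in>?W. X w \<omega> = ?a w}"
    using tree_chain_root_state[OF tc] y_ne_root by (intro measure_eq_AE) auto
  also have "\<dots> = P (pdist \<rho> par l y - pdist \<rho> par l (\<rho>, 0)) i j"
    using tree_chain_law[OF tc, of ?W ?a] y(1) y_ne_root meet_closed_root_pair[OF le, where V=V and l=l]
      parent_in_root_pair[OF le y_ne_root] root_in_tree_points[where V=V and l=l]
    by (simp add: Diff_insert2[symmetric])
  also have "pdist \<rho> par l (\<rho>, 0) = 0"
    by (simp add: pdist_def)
  finally show ?thesis by simp
qed

context prob_space
begin

lemma card_events_eq_sum_indicator: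
  "finite R \<Longrightarrow> real (card {r \<in> R. \<omega> \<in> A r}) = (\<Sum>r\<in>R. indicator (A r) \<omega>)"
  by (simp add: indicator_def sum.If_cases Int_def)

lemma borel_measurable_card_events:
  assumes "finite R" "\<And>r. r \<in> R \<Longrightarrow> A r \<in> events"
  shows "(\<lambda>\<omega>. real (card {r \<in> R. \<omega> \<in> A r})) \<in> borel_measurable M"
  unfolding card_events_eq_sum_indicator[OF assms(1)] using assms(2)
  by (intro borel_measurable_sum borel_measurable_indicator)

lemma expectation_card_events:
  assumes "finite R" "\<And>r. r \<in> R \<Longrightarrow> A r \<in> events" "\<And>r. r \<in> R \<Longrightarrow> prob (A r) = p"
  shows "expectation (\<lambda>\<omega>. real (card {r \<in> R. \<omega> \<in> A r})) = p * real (card R)"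
proof -
  have "expectation (\<lambda>\<omega>. real (card {r \<in> R. \<omega> \<in> A r})) = (\<Sum>r\<in>R. prob (A r \<inter> space M))"
    using assms(1,2) by (simp add: card_events_eq_sum_indicator Bochner_Integration.integral_sum less_top[symmetric])
  also have "\<dots> = p * real (card R)"
    using assms(2,3) by (simp add: sets.Int_space_eq2)
  finally show ?thesis .
qed

lemma variance_card_events_le:
  assumes "finite R" "\<And>r. r \<in> R \<Longrightarrow> A r \<in> events" "\<And>r. r \<in> R \<Longrightarrow> prob (A r) = p"
  defines "N \<equiv> \<lambda>\<omega>. real (card {r \<in> R. \<omega> \<in> A r})"
  shows "variance N \<le> real (card R) ^ 2 * (p * (1 - p))"
proof -
  let ?m = "real (card R)" and ?I = "\<lambda>r. indicator (A r) :: 'a \<Rightarrow> real"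
  have N: "N \<omega> = (\<Sum>r\<in>R. ?I r \<omega>)" for \<omega>
    unfolding N_def using assms(1) by (rule card_events_eq_sum_indicator)
  have int_I: "integrable M (?I r)" if "r \<in> R" for r
    using that assms(2) by (simp add: less_top[symmetric])
  have [measurable]: "N \<in> borel_measurable M"
    unfolding N_def using assms(1,2) by (rule borel_measurable_card_events)
  have "(N \<omega> - p * ?m)\<^sup>2 \<le> ?m * (\<Sum>r\<in>R. (1 - 2 * p) * ?I r \<omega> + p\<^sup>2)" for \<omega>
  proof -
    have "(N \<omega> - p * ?m)\<^sup>2 = (\<Sum>r\<in>R. ?I r \<omega> - p)\<^sup>2"
      by (simp add: N sum_subtractf mult.commute)
    also have "\<dots> \<le> (\<Sum>r\<in>R. (?I r \<omega> - p)\<^sup>2) * ?m"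
      by (rule sum_squared_le_sum_of_squares)
    also have "(\<Sum>r\<in>R. (?I r \<omega> - p)\<^sup>2) = (\<Sum>r\<in>R. (1 - 2 * p) * ?I r \<omega> + p\<^sup>2)"
      by (intro sum.cong) (auto simp: indicator_def power2_eq_square algebra_simps)
    finally show ?thesis by (simp add: mult.commute)
  qed
  moreover have "integrable M (\<lambda>\<omega>. (N \<omega> - p * ?m)\<^sup>2)"
  proof (rule integrable_const_bound[where B = "(?m + \<bar>p * ?m\<bar>)\<^sup>2"])
    have "\<bar>N \<omega>\<bar> \<le> ?m" for \<omega>
      using assms(1) by (simp add: N_def card_mono)
    then show "AE \<omega> in M. norm ((N \<omega> - p * ?m)\<^sup>2) \<le> (?m + \<bar>p * ?m\<bar>)\<^sup>2"
      by (intro AE_I2) (simp add: abs_le_square_iff[symmetric] abs_triangle_ineq4 add_mono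
          order_trans[OF abs_triangle_ineq4])
  qed simp
  ultimately have "expectation (\<lambda>\<omega>. (N \<omega> - p * ?m)\<^sup>2)
      \<le> expectation (\<lambda>\<omega>. ?m * (\<Sum>r\<in>R. (1 - 2 * p) * ?I r \<omega> + p\<^sup>2))"
    using assms(1) int_I by (intro integral_mono) auto
  moreover have "expectation N = p * ?m"
    unfolding N_def using assms(1-3) by (rule expectation_card_events)
  ultimately have "variance N \<le> expectation (\<lambda>\<omega>. ?m * (\<Sum>r\<in>R. (1 - 2 * p) * ?I r \<omega> + p\<^sup>2))"
    by simp
  also have "\<dots> = ?m * ?m * ((1 - 2 * p) * p + p\<^sup>2)"
    using assms(1-3) int_I by (simp add: Bochner_Integration.integral_sum prob_space sets.Int_space_eq2)
  finally show ?thesis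
    by (simp add: power2_eq_square algebra_simps)
qed

lemma card_events_deviation_nonempty:
  assumes "finite R" "R \<noteq> {}" "\<And>r. r \<in> R \<Longrightarrow> A r \<in> events"
    and "\<And>r. r \<in> R \<Longrightarrow> prob (A r) = p" and "\<delta> > 0"
  shows "prob {\<omega> \<in> space M. \<bar>real (card {r \<in> R. \<omega> \<in> A r}) - p * real (card R)\<bar> > \<delta> * real (card R)}
    \<le> (1 - p) / \<delta>\<^sup>2"
proof -
  let ?m = "real (card R)" and ?N = "\<lambda>\<omega>. real (card {r \<in> R. \<omega> \<in> A r})"
  have m: "?m > 0" using assms(1,2) by (simp add: card_gt_0_iff)
  have [measurable]: "?N \<in> borel_measurable M"
    using assms(1,3) by (rule borel_measurable_card_events)
  have E: "expectation ?N = p * ?m"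
    using assms(1,3,4) by (rule expectation_card_events)
  have "integrable M (\<lambda>\<omega>. ?N \<omega> ^ 2)"
  proof (rule integrable_const_bound[where B = "?m ^ 2"])
    show "AE \<omega> in M. norm (?N \<omega> ^ 2) \<le> ?m ^ 2"
      using assms(1) by (intro AE_I2) (simp add: card_mono power_mono)
  qed simp
  have "prob {\<omega> \<in> space M. \<bar>?N \<omega> - p * ?m\<bar> > \<delta> * ?m}
      \<le> prob {\<omega> \<in> space M. \<bar>?N \<omega> - expectation ?N\<bar> \<ge> \<delta> * ?m}"
    unfolding E by (intro finite_measure_mono) auto
  also have "\<dots> \<le> variance ?N / (\<delta> * ?m)\<^sup>2"
    using assms(5) m \<open>integrable M (\<lambda>\<omega>. ?N \<omega> ^ 2)\<close> by (intro Chebyshev_inequality) simp_all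
  also have "\<dots> \<le> ?m ^ 2 * (p * (1 - p)) / (\<delta> * ?m)\<^sup>2"
    using variance_card_events_le[OF assms(1,3,4)] by (intro divide_right_mono) simp_all
  also have "\<dots> = p * (1 - p) / \<delta>\<^sup>2"
    using m by (simp add: power_mult_distrib)
  also have "\<dots> \<le> (1 - p) / \<delta>\<^sup>2"
    using sum_squares_ge_zero[of "1 - p" 0]
    by (intro divide_right_mono) (simp_all add: power2_eq_square algebra_simps)
  finally show ?thesis .
qed

lemma card_events_deviation:
  assumes "finite R" "\<And>r. r \<in> R \<Longrightarrow> A r \<in> events"
    and "\<And>r. r \<in> R \<Longrightarrow> prob (A r) = p" "p \<le> 1" "\<delta> > 0"
  shows "prob {\<omega> \<in> space M. \<bar>real (card {r \<in> R. \<omega> \<in> A r}) - p * real (card R)\<bar> > \<delta> * real (card R)}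
    \<le> (1 - p) / \<delta>\<^sup>2"
proof (cases "R = {}")
  case True
  then show ?thesis using assms(4) by simp
qed (use card_events_deviation_nonempty assms in blast)

end

theorem mainTheorem9:
  fixes V :: "'v set" and \<rho> :: 'v and par :: "'v \<Rightarrow> 'v" and l :: "'v \<Rightarrow> real"
    and P :: "real \<Rightarrow> 'a::countable \<Rightarrow> 'a \<Rightarrow> real" and Q :: "'a \<Rightarrow> 'a \<Rightarrow> real"
    and M :: "'w measure" and X :: "'v \<times> real \<Rightarrow> 'w \<Rightarrow> 'a"
    and i :: 'a and s :: real and m :: nat and x :: "nat \<Rightarrow> 'v \<times> real"
  assumes "rooted_tree V \<rho> par l"
    and "markov_transition P Q"
    and "tree_chain V \<rho> par l P i M X"
    and "s > 0"
    and "inj_on x {1..m}"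
    and "\<forall>r\<in>{1..m}. x r \<in> tree_points V \<rho> l \<and> pdist \<rho> par l (x r) = s"
  shows "(\<integral>\<omega>. occ X x m i \<omega> \<partial>M) = P s i i * real m \<and>
    (\<forall>\<delta>>0. measure M {\<omega> \<in> space M.
        \<bar>occ X x m i \<omega> - (\<integral>\<omega>'. occ X x m i \<omega>' \<partial>M)\<bar> > \<delta> * real m}
      \<le> (1 - exp (- qrate Q i * s)) / \<delta>\<^sup>2)"
proof -
  interpret prob_space M
    using assms(3) by (rule tree_chain_prob_space)
  define A where "A r = {\<omega> \<in> space M. X (x r) \<omega> = i}" for r
  have x: "x r \<in> tree_points V \<rho> l" "pdist \<rho> par l (x r) = s" if "r \<in> {1..m}" for r
    using assms(6) that by auto
  have events: "A r \<in> events" if "r \<in> {1..m}" for r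
    using tree_chain_measurable[OF assms(3) x(1)[OF that]] unfolding A_def by measurable
  have prob: "prob (A r) = P s i i" if "r \<in> {1..m}" for r
    using tree_chain_point_prob[OF assms(1,3) x(1)[OF that]] x(2)[OF that] assms(4)
    by (simp add: A_def)
  have occ: "occ X x m i \<omega> = real (card {r \<in> {1..m}. \<omega> \<in> A r})" if "\<omega> \<in> space M" for \<omega>
    using that by (simp add: occ_def A_def)
  have "(\<integral>\<omega>. occ X x m i \<omega> \<partial>M) = expectation (\<lambda>\<omega>. real (card {r \<in> {1..m}. \<omega> \<in> A r}))"
    by (rule Bochner_Integration.integral_cong) (simp_all add: occ)
  also have "\<dots> = P s i i * real m"
    using expectation_card_events[of "{1..m}" A "P s i i"] events prob by simp
  finally have E: "(\<integral>\<omega>. occ X x m i \<omega> \<partial>M) = P s i i * real m" .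
  show ?thesis
  proof (intro conjI allI impI E)
    fix \<delta> :: real assume "\<delta> > 0"
    have "measure M {\<omega> \<in> space M. \<bar>occ X x m i \<omega> - (\<integral>\<omega>'. occ X x m i \<omega>' \<partial>M)\<bar> > \<delta> * real m}
        = prob {\<omega> \<in> space M. \<bar>real (card {r \<in> {1..m}. \<omega> \<in> A r}) - P s i i * real m\<bar> > \<delta> * real m}"
      unfolding E by (intro arg_cong[where f = prob] Collect_cong) (auto simp: occ)
    also have "\<dots> \<le> (1 - P s i i) / \<delta>\<^sup>2"
      using card_events_deviation[of "{1..m}" A "P s i i" \<delta>] events prob \<open>\<delta> > 0\<close>
        markov_transition_le_one[OF assms(2)] assms(4) by simp
    also have "\<dots> \<le> (1 - exp (- qrate Q i * s)) / \<delta>\<^sup>2"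
      using markov_transition_diag_exp_le[OF assms(2)] assms(4) by (intro divide_right_mono) auto
    finally show "measure M {\<omega> \<in> space M.
        \<bar>occ X x m i \<omega> - (\<integral>\<omega>'. occ X x m i \<omega>' \<partial>M)\<bar> > \<delta> * real m}
      \<le> (1 - exp (- qrate Q i * s)) / \<delta>\<^sup>2" .
  qed
qed

end
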